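(* Let $\mathcal{A}\subseteq\mathbb{R}^3$ be measurable with finite positive measure, $k_0,\eta>0$, and for $k\in\{1,2\}$ let $\mathsf{G}_k\in L^2(\mathcal{A})$ with $\mathsf{g}_k=\int_{\mathcal{A}}|\mathsf{G}_k|^2>0$, $\mathsf{H}_k=\frac{\mathrm{j}k_0\eta}{\sqrt{4\pi}}\mathsf{G}_k$, $A_{\mathsf{u},k}>0$, $\sigma_k>0$, and $\hat{\mathsf{H}}_k=\frac{\sqrt{A_{\mathsf{u},k}}}{\sigma_k}\mathsf{H}_k$. Let $\rho=\frac{\int_{\mathcal{A}}\mathsf{G}_1^*\mathsf{G}_2}{\sqrt{\mathsf{g}_1\mathsf{g}_2}}$. Let $\mathsf{P}>0$ and $\mathsf{P}_1,\mathsf{P}_2\ge0$ with $\mathsf{P}_1+\mathsf{P}_2=\mathsf{P}$, and put $\overline{\gamma}_{\mathsf{dl},k}=\frac{A_{\mathsf{u},k}k_0^2\eta^2}{4\pi\sigma_k^2}\mathsf{P}_k$. Define the source currents $$\mathsf{J}_{\mathsf{dl},1}(\mathbf{r})=\sqrt{\mathsf{P}_1}\,\frac{\hat{\mathsf{H}}_1^*(\mathbf{r})-\frac{\mathsf{P}_2\int_{\mathcal{A}}\hat{\mathsf{H}}_1^*\hat{\mathsf{H}}_2}{1+\mathsf{P}_2\int_{\mathcal{A}}|\hat{\mathsf{H}}_2|^2}\hat{\mathsf{H}}_2^*(\mathbf{r})}{\sqrt{\int_{\mathcal{A}}|\hat{\mathsf{H}}_1|^2-\frac{\mathsf{P}_2|\int_{\mathcal{A}}\hat{\mathsf{H}}_1^*\hat{\mathsf{H}}_2|^2}{1+\mathsf{P}_2\int_{\mathcal{A}}|\hat{\mathsf{H}}_2|^2}}},\qquad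 \mathsf{J}_{\mathsf{dl},2}(\mathbf{r})=\sqrt{\mathsf{P}_2}\,\frac{\hat{\mathsf{H}}_2^*(\mathbf{r})\sqrt{1+|\int_{\mathcal{A}}\hat{\mathsf{H}}_2\mathsf{J}_{\mathsf{dl},1}|^2}}{\sqrt{\int_{\mathcal{A}}|\hat{\mathsf{H}}_2|^2}}.$$ Define the downlink rates under dirty-paper coding with order $2\rightarrow1$: $$\mathsf{R}_{\mathsf{dl},1}^{2\rightarrow1}=\log_2\Big(1+\Big|\int_{\mathcal{A}}\hat{\mathsf{H}}_1\mathsf{J}_{\mathsf{dl},1}\Big|^2\Big),\qquad \mathsf{R}_{\mathsf{dl},2}^{2\rightarrow1}=\log_2\Big(1+\frac{|\int_{\mathcal{A}}\hat{\mathsf{H}}_2\mathsf{J}_{\mathsf{dl},2}|^2}{1+|\int_{\mathcal{A}}\hat{\mathsf{H}}_2\mathsf{J}_{\mathsf{dl},1}|^2}\Big).$$ Then $$\mathsf{R}_{\mathsf{dl},1}^{2\rightarrow1}=\log_2\!\Big(1+\overline{\gamma}_{\mathsf{dl},1}\mathsf{g}_1\Big(1-\tfrac{\overline{\gamma}_{\mathsf{dl},2}\mathsf{g}_2|\rho|^2}{1+\overline{\gamma}_{\mathsf{dl},2}\mathsf{g}_2}\Big)\Big),\qquad \mathsf{R}_{\mathsf{dl},2}^{2\rightarrow1}=\log_2(1+\overline{\gamma}_{\mathsf{dl},2}\mathsf{g}_2),$$ so that $\mathsf{R}_{\mathsf{dl},1}^{2\rightarrow1}+\mathsf{R}_{\mathsf{dl},2}^{2\rightarrow1}=\log_2(1+\overline{\gamma}_{\mathsf{dl},1}\mathsf{g}_1+\overline{\gamma}_{\mathsf{dl},2}\mathsf{g}_2+\overline{\gamma}_{\mathsf{dl},1}\overline{\gamma}_{\mathsf{dl},2}\mathsf{g}_1\mathsf{g}_2(1-|\rho|^2))$,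 and moreover $$\sum_{k=1}^2\int_{\mathcal{A}}|\mathsf{J}_{\mathsf{dl},k}(\mathbf{r})|^2\mathrm{d}\mathbf{r}=\mathsf{P}_1+\mathsf{P}_2=\mathsf{P}.$$
   Context: Integrals without variable are over $\mathbf{r}\in\mathcal{A}$ with respect to Lebesgue measure. In the paper $\mathcal{A}$ is the base-station continuous aperture, $\mathsf{G}_k(\mathbf{r})=\frac{e^{-\mathrm{j}k_0\|\mathbf{r}-\mathbf{s}_k\|}}{\sqrt{4\pi}\|\mathbf{r}-\mathbf{s}_k\|}\sqrt{\frac{|\mathbf{e}^{\mathsf{T}}(\mathbf{s}_k-\mathbf{r})|}{\|\mathbf{r}-\mathbf{s}_k\|}}$ (user locations $\mathbf{s}_k\notin\overline{\mathcal{A}}$, aperture normal $\mathbf{e}$), $A_{\mathsf{u},k}$ is user $k$'s aperture size, $\sigma_k^2$ its noise intensity, and $(\mathsf{P}_1,\mathsf{P}_2)$ is a power allocation of the dual uplink channel (the downlink sum-rate capacity is attained when it is the optimal dual allocation). *)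

theory Defs
  imports "HOL-Analysis.Analysis"
begin

definition L2_on :: "(real^3) set \<Rightarrow> (real^3 \<Rightarrow> complex) \<Rightarrow> bool" where
  "L2_on A f \<longleftrightarrow> f \<in> borel_measurable (lebesgue_on A) \<and>
     integrable (lebesgue_on A) (\<lambda>r. (cmod (f r))\<^sup>2)"

definition cint :: "(real^3) set \<Rightarrow> (real^3 \<Rightarrow> complex) \<Rightarrow> complex" where
  "cint A f = integral\<^sup>L (lebesgue_on A) f"

definition rint :: "(real^3) set \<Rightarrow> (real^3 \<Rightarrow> real) \<Rightarrow> real" where
  "rint A f = integral\<^sup>L (lebesgue_on A) f"

end

theory Submission
  imports Defs
begin

text \<open>The channels enter only through their Gram data: the energies \<open>h\<^sub>k = \<integral>|H\<^sub>k|\<^sup>2\<close> and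
  the cross term \<open>z = \<integral> cnj H\<^sub>1 * H\<^sub>2\<close>, with \<open>|z|\<^sup>2 = |\<rho>|\<^sup>2 h\<^sub>1 h\<^sub>2\<close> because \<open>\<rho>\<close> is invariant under
  rescaling the channels. \<open>J\<^sub>1\<close> is a combination of \<open>cnj H\<^sub>1\<close> and \<open>cnj H\<^sub>2\<close> and \<open>J\<^sub>2\<close> a multiple of
  \<open>cnj H\<^sub>2\<close>, so all integrals in the rates and powers are quadratic expressions in this data.
  One finds \<open>|\<integral>H\<^sub>1 J\<^sub>1|\<^sup>2 = P\<^sub>1 D\<close> with \<open>D = h\<^sub>1 - P\<^sub>2|z|\<^sup>2/(1 + P\<^sub>2 h\<^sub>2)\<close>, positive by Cauchy-Schwarz,
  the SINR \<open>P\<^sub>2 h\<^sub>2\<close> for user 2, and \<open>\<integral>|J\<^sub>1|\<^sup>2 = P\<^sub>1 - P\<^sub>2 I\<close>, \<open>\<integral>|J\<^sub>2|\<^sup>2 = P\<^sub>2 (1 + I)\<close> where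
  \<open>I = |\<integral>H\<^sub>2 J\<^sub>1|\<^sup>2\<close> is the interference at user 2, so the powers add up to \<open>P\<^sub>1 + P\<^sub>2\<close>.
  Finally \<open>P\<^sub>k h\<^sub>k = \<gamma>\<^sub>k g\<^sub>k\<close>.\<close>

definition square_integrable :: "'a measure \<Rightarrow> ('a \<Rightarrow> complex) \<Rightarrow> bool" where
  "square_integrable M u \<longleftrightarrow> u \<in> borel_measurable M \<and> integrable M (\<lambda>x. (cmod (u x))\<^sup>2)"

lemma integrable_mult_square_integrable:
  assumes "square_integrable M u" "square_integrable M v"
  shows "integrable M (\<lambda>x. u x * v x)"
proof (rule Bochner_Integration.integrable_bound)
  show "integrable M (\<lambda>x. (cmod (u x))\<^sup>2 + (cmod (v x))\<^sup>2)"
    using assms unfolding square_integrable_def by auto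
  show "(\<lambda>x. u x * v x) \<in> borel_measurable M"
    using assms unfolding square_integrable_def by auto
  show "AE x in M. norm (u x * v x) \<le> norm ((cmod (u x))\<^sup>2 + (cmod (v x))\<^sup>2)"
  proof (rule AE_I2)
    fix x
    have "cmod (u x) * cmod (v x) \<le> 2 * cmod (u x) * cmod (v x)" by simp
    also have "\<dots> \<le> (cmod (u x))\<^sup>2 + (cmod (v x))\<^sup>2" by (rule sum_squares_bound)
    finally show "norm (u x * v x) \<le> norm ((cmod (u x))\<^sup>2 + (cmod (v x))\<^sup>2)"
      by (simp add: norm_mult)
  qed
qed

lemma square_integrable_cnj: "square_integrable M u \<Longrightarrow> square_integrable M (\<lambda>x. cnj (u x))"
  unfolding square_integrable_def by (auto intro: borel_measurable_continuous_on continuous_intros)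

lemma square_integrable_cmult: "square_integrable M u \<Longrightarrow> square_integrable M (\<lambda>x. c * u x)"
  unfolding square_integrable_def by (auto simp: norm_mult power_mult_distrib)

lemma integral_norm_square_cmult:
  "integral\<^sup>L M (\<lambda>x. (cmod (c * u x))\<^sup>2) = (cmod c)\<^sup>2 * integral\<^sup>L M (\<lambda>x. (cmod (u x))\<^sup>2)"
  by (simp add: norm_mult power_mult_distrib)

lemma integral_mult_cnj_self:
  "integral\<^sup>L M (\<lambda>x. u x * cnj (u x)) = of_real (integral\<^sup>L M (\<lambda>x. (cmod (u x))\<^sup>2))"
  by (simp only: complex_norm_square[symmetric] integral_complex_of_real)

lemma integral_mult_lincomb:
  assumes "square_integrable M w" "square_integrable M u" "square_integrable M v"
  shows "integral\<^sup>L M (\<lambda>x. w x * (a * u x + b * v x)) =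
    a * integral\<^sup>L M (\<lambda>x. w x * u x) + b * integral\<^sup>L M (\<lambda>x. w x * v x)"
  using integrable_mult_square_integrable[OF assms(1,2)] integrable_mult_square_integrable[OF assms(1,3)]
  by (simp add: distrib_left mult.left_commute)

lemma integral_norm_square_lincomb:
  assumes "square_integrable M u" "square_integrable M v"
  shows "integral\<^sup>L M (\<lambda>x. (cmod (a * u x + b * v x))\<^sup>2) =
    (cmod a)\<^sup>2 * integral\<^sup>L M (\<lambda>x. (cmod (u x))\<^sup>2) + (cmod b)\<^sup>2 * integral\<^sup>L M (\<lambda>x. (cmod (v x))\<^sup>2)
    + 2 * Re (a * cnj b * integral\<^sup>L M (\<lambda>x. u x * cnj (v x)))"
proof -
  define w where "w x = Re (a * cnj b * (u x * cnj (v x)))" for x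
  have pointwise: "(cmod (a * u x + b * v x))\<^sup>2 =
      (cmod a)\<^sup>2 * (cmod (u x))\<^sup>2 + (cmod b)\<^sup>2 * (cmod (v x))\<^sup>2 + 2 * w x" for x
    unfolding w_def cmod_power2 by (simp add: power2_eq_square algebra_simps)
  have "integrable M (\<lambda>x. a * cnj b * (u x * cnj (v x)))"
    using assms by (intro integrable_mult_right integrable_mult_square_integrable square_integrable_cnj)
  then have "integrable M w" and "integral\<^sup>L M w = Re (a * cnj b * integral\<^sup>L M (\<lambda>x. u x * cnj (v x)))"
    unfolding w_def by (auto simp only: integrable_Re integral_Re integral_mult_right_zero)
  then show ?thesis
    using assms unfolding pointwise square_integrable_def by simp
qed

lemma Cauchy_Schwarz_integral_cnj_mult:
  assumes u: "square_integrable M u" and v: "square_integrable M v"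
    and v_pos: "0 < integral\<^sup>L M (\<lambda>x. (cmod (v x))\<^sup>2)"
  shows "(cmod (integral\<^sup>L M (\<lambda>x. cnj (u x) * v x)))\<^sup>2 \<le>
    integral\<^sup>L M (\<lambda>x. (cmod (u x))\<^sup>2) * integral\<^sup>L M (\<lambda>x. (cmod (v x))\<^sup>2)"
proof -
  define Nu where "Nu = integral\<^sup>L M (\<lambda>x. (cmod (u x))\<^sup>2)"
  define Nv where "Nv = integral\<^sup>L M (\<lambda>x. (cmod (v x))\<^sup>2)"
  define q where "q = integral\<^sup>L M (\<lambda>x. u x * cnj (v x))"
  have "0 \<le> integral\<^sup>L M (\<lambda>x. (cmod (of_real Nv * u x + (- q) * v x))\<^sup>2)"
    by simp
  also have "\<dots> = Nv * (Nv * Nu - (cmod q)\<^sup>2)"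
    unfolding integral_norm_square_lincomb[OF u v] Nu_def[symmetric] Nv_def[symmetric] q_def[symmetric]
    using cmod_power2[of q] by (simp add: power2_eq_square algebra_simps)
  finally have "(cmod q)\<^sup>2 \<le> Nu * Nv"
    using v_pos unfolding Nv_def by (simp add: zero_le_mult_iff algebra_simps)
  moreover have "integral\<^sup>L M (\<lambda>x. cnj (u x) * v x) = cnj q"
    unfolding q_def Bochner_Integration.integral_cnj[symmetric] by simp
  ultimately show ?thesis
    unfolding Nu_def Nv_def by simp
qed

definition correlation :: "'a measure \<Rightarrow> ('a \<Rightarrow> complex) \<Rightarrow> ('a \<Rightarrow> complex) \<Rightarrow> complex" where
  "correlation M u v = integral\<^sup>L M (\<lambda>x. cnj (u x) * v x) /
    of_real (sqrt (integral\<^sup>L M (\<lambda>x. (cmod (u x))\<^sup>2) * integral\<^sup>L M (\<lambda>x. (cmod (v x))\<^sup>2)))"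

lemma norm_correlation_le_1:
  assumes "square_integrable M u" "square_integrable M v"
    and "0 < integral\<^sup>L M (\<lambda>x. (cmod (v x))\<^sup>2)"
  shows "cmod (correlation M u v) \<le> 1"
proof -
  define s where
    "s = sqrt (integral\<^sup>L M (\<lambda>x. (cmod (u x))\<^sup>2) * integral\<^sup>L M (\<lambda>x. (cmod (v x))\<^sup>2))"
  have "cmod (integral\<^sup>L M (\<lambda>x. cnj (u x) * v x)) \<le> s"
    unfolding s_def using Cauchy_Schwarz_integral_cnj_mult[OF assms] by (rule real_le_rsqrt)
  moreover have "0 \<le> s"
    unfolding s_def by simp
  ultimately show ?thesis
    unfolding correlation_def s_def[symmetric] norm_divide norm_of_real
    by (cases "s = 0") simp_all
qed

lemma norm_correlation_cmult:
  assumes "a \<noteq> 0" "b \<noteq> 0"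
  shows "cmod (correlation M (\<lambda>x. a * u x) (\<lambda>x. b * v x)) = cmod (correlation M u v)"
proof -
  have "integral\<^sup>L M (\<lambda>x. cnj (a * u x) * (b * v x)) = cnj a * b * integral\<^sup>L M (\<lambda>x. cnj (u x) * v x)"
    by (simp add: mult_ac)
  then show ?thesis
    using assms
    by (simp add: correlation_def norm_divide norm_mult power_mult_distrib real_sqrt_mult)
qed

lemma norm_integral_cnj_mult_square:
  assumes "0 < integral\<^sup>L M (\<lambda>x. (cmod (u x))\<^sup>2)" "0 < integral\<^sup>L M (\<lambda>x. (cmod (v x))\<^sup>2)"
  shows "(cmod (integral\<^sup>L M (\<lambda>x. cnj (u x) * v x)))\<^sup>2 =
    (cmod (correlation M u v))\<^sup>2 * integral\<^sup>L M (\<lambda>x. (cmod (u x))\<^sup>2) * integral\<^sup>L M (\<lambda>x. (cmod (v x))\<^sup>2)"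
  using assms by (simp add: correlation_def norm_divide power_divide)

locale dirty_paper_two_users =
  fixes M :: "'a measure" and u1 u2 :: "'a \<Rightarrow> complex" and P1 P2 :: real
  assumes square_integrable_u1: "square_integrable M u1"
    and square_integrable_u2: "square_integrable M u2"
    and u1_nonzero: "0 < integral\<^sup>L M (\<lambda>x. (cmod (u1 x))\<^sup>2)"
    and u2_nonzero: "0 < integral\<^sup>L M (\<lambda>x. (cmod (u2 x))\<^sup>2)"
    and P1_nonneg: "0 \<le> P1" and P2_nonneg: "0 \<le> P2"
begin

definition energy1 :: real where "energy1 = integral\<^sup>L M (\<lambda>x. (cmod (u1 x))\<^sup>2)"
definition energy2 :: real where "energy2 = integral\<^sup>L M (\<lambda>x. (cmod (u2 x))\<^sup>2)"
definition cross_energy :: complex where "cross_energy = integral\<^sup>L M (\<lambda>x. cnj (u1 x) * u2 x)"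

text \<open>\<open>P1 * mmse_gain1\<close> is the SINR of user 1 in the dual uplink under an MMSE receiver that
  treats user 2 as interference (Sherman-Morrison applied to \<open>(I + P2 u2 u2\<^sup>H)\<^sup>-\<^sup>1\<close>);
  \<open>precoder1\<close> is the corresponding normalised MMSE filter.\<close>
definition mmse_gain1 :: real where
  "mmse_gain1 = energy1 - P2 * (cmod cross_energy)\<^sup>2 / (1 + P2 * energy2)"

definition precoder1 :: "'a \<Rightarrow> complex" where
  "precoder1 = (\<lambda>r. of_real (sqrt P1) *
     (cnj (u1 r) - (of_real P2 * cross_energy) / of_real (1 + P2 * energy2) * cnj (u2 r)) /
     of_real (sqrt mmse_gain1))"

definition interference2 :: real where
  "interference2 = (cmod (integral\<^sup>L M (\<lambda>x. u2 x * precoder1 x)))\<^sup>2"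

definition precoder2 :: "'a \<Rightarrow> complex" where
  "precoder2 = (\<lambda>r. of_real (sqrt P2) * (cnj (u2 r) * of_real (sqrt (1 + interference2))) /
     of_real (sqrt energy2))"

lemma energy1_pos: "0 < energy1"
  using u1_nonzero unfolding energy1_def .

lemma energy2_pos: "0 < energy2"
  using u2_nonzero unfolding energy2_def .

lemma norm_cross_energy_square:
  "(cmod cross_energy)\<^sup>2 = (cmod (correlation M u1 u2))\<^sup>2 * energy1 * energy2"
  unfolding cross_energy_def energy1_def energy2_def
  using u1_nonzero u2_nonzero by (rule norm_integral_cnj_mult_square)

lemma mmse_gain1_eq:
  "mmse_gain1 = energy1 * (1 - P2 * energy2 * (cmod (correlation M u1 u2))\<^sup>2 / (1 + P2 * energy2))"
  unfolding mmse_gain1_def norm_cross_energy_square using energy2_pos P2_nonneg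
  by (simp add: field_simps)

lemma mmse_gain1_pos: "0 < mmse_gain1"
proof -
  define x where "x = P2 * energy2"
  define r where "r = (cmod (correlation M u1 u2))\<^sup>2"
  have "0 \<le> x" unfolding x_def using P2_nonneg energy2_pos by simp
  moreover have "r \<le> 1"
    unfolding r_def using norm_correlation_le_1[OF square_integrable_u1 square_integrable_u2 u2_nonzero]
    by (simp add: power_le_one)
  ultimately have "x * r < 1 + x"
    using mult_left_le[of r x] by linarith
  with \<open>0 \<le> x\<close> have "0 < 1 - x * r / (1 + x)"
    by (simp add: field_simps)
  then show ?thesis
    unfolding mmse_gain1_eq x_def[symmetric] r_def[symmetric] using energy1_pos by simp
qed

lemma one_plus_P2_energy2_pos: "0 < 1 + P2 * energy2"
  using P2_nonneg energy2_pos by (simp add: add_pos_nonneg)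

lemma one_plus_P2_energy2_nonzero: "(1 + of_real P2 * of_real energy2 :: complex) \<noteq> 0"
  using one_plus_P2_energy2_pos by (metis of_real_1 of_real_add of_real_eq_0_iff of_real_mult less_irrefl)

lemma precoder1_lincomb:
  "precoder1 = (\<lambda>r. of_real (sqrt (P1 / mmse_gain1)) * cnj (u1 r) +
     (- of_real (sqrt (P1 / mmse_gain1) * (P2 / (1 + P2 * energy2))) * cross_energy) * cnj (u2 r))"
proof
  fix r
  have "(of_real P2 * cross_energy) / of_real (1 + P2 * energy2) =
      of_real (P2 / (1 + P2 * energy2)) * cross_energy"
    by simp
  then have "precoder1 r = of_real (sqrt P1) / of_real (sqrt mmse_gain1) *
      (cnj (u1 r) - of_real (P2 / (1 + P2 * energy2)) * cross_energy * cnj (u2 r))"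
    unfolding precoder1_def by simp
  then show "precoder1 r = of_real (sqrt (P1 / mmse_gain1)) * cnj (u1 r) +
     (- of_real (sqrt (P1 / mmse_gain1) * (P2 / (1 + P2 * energy2))) * cross_energy) * cnj (u2 r)"
    by (simp add: real_sqrt_divide algebra_simps)
qed

lemma integral_mult_precoder1:
  assumes "square_integrable M w"
  shows "integral\<^sup>L M (\<lambda>x. w x * precoder1 x) = of_real (sqrt (P1 / mmse_gain1)) *
    (integral\<^sup>L M (\<lambda>x. w x * cnj (u1 x)) -
     of_real (P2 / (1 + P2 * energy2)) * cross_energy * integral\<^sup>L M (\<lambda>x. w x * cnj (u2 x)))"
  unfolding precoder1_lincomb integral_mult_lincomb[OF assms
    square_integrable_cnj[OF square_integrable_u1] square_integrable_cnj[OF square_integrable_u2]]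
  by (simp add: algebra_simps)

lemma integral_u1_precoder1:
  "integral\<^sup>L M (\<lambda>x. u1 x * precoder1 x) = of_real (sqrt (P1 / mmse_gain1) * mmse_gain1)"
proof -
  have "integral\<^sup>L M (\<lambda>x. u1 x * cnj (u2 x)) = cnj cross_energy"
    unfolding cross_energy_def Bochner_Integration.integral_cnj[symmetric] by simp
  then show ?thesis
    using one_plus_P2_energy2_nonzero complex_norm_square[of cross_energy]
    unfolding integral_mult_precoder1[OF square_integrable_u1] integral_mult_cnj_self
      energy1_def[symmetric]
    by (simp add: mmse_gain1_def field_simps)
qed

lemma integral_u2_precoder1:
  "integral\<^sup>L M (\<lambda>x. u2 x * precoder1 x) =
    of_real (sqrt (P1 / mmse_gain1) / (1 + P2 * energy2)) * cross_energy"
proof -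
  have "integral\<^sup>L M (\<lambda>x. u2 x * cnj (u1 x)) = cross_energy"
    unfolding cross_energy_def by (simp add: mult.commute)
  then show ?thesis
    using one_plus_P2_energy2_nonzero
    unfolding integral_mult_precoder1[OF square_integrable_u2] integral_mult_cnj_self
      energy2_def[symmetric]
    by (simp add: field_simps)
qed

lemma sqrt_P1_mmse_gain1_square: "(sqrt (P1 / mmse_gain1))\<^sup>2 = P1 / mmse_gain1"
  using P1_nonneg mmse_gain1_pos by simp

lemma norm_integral_u1_precoder1_square:
  "(cmod (integral\<^sup>L M (\<lambda>x. u1 x * precoder1 x)))\<^sup>2 = P1 * mmse_gain1"
  unfolding integral_u1_precoder1 norm_of_real power2_abs power_mult_distrib sqrt_P1_mmse_gain1_square
  using mmse_gain1_pos by (simp add: power2_eq_square)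

lemma interference2_eq:
  "interference2 = P1 * (cmod cross_energy)\<^sup>2 / (mmse_gain1 * (1 + P2 * energy2)\<^sup>2)"
  unfolding interference2_def integral_u2_precoder1 norm_mult norm_of_real
    power_mult_distrib power2_abs power_divide sqrt_P1_mmse_gain1_square
  by simp

lemma integral_norm_square_precoder1:
  "integral\<^sup>L M (\<lambda>x. (cmod (precoder1 x))\<^sup>2) = P1 / mmse_gain1 *
    (energy1 + (P2 / (1 + P2 * energy2))\<^sup>2 * (cmod cross_energy)\<^sup>2 * energy2
     - 2 * (P2 / (1 + P2 * energy2)) * (cmod cross_energy)\<^sup>2)"
proof -
  define \<kappa> where "\<kappa> = sqrt (P1 / mmse_gain1)"
  define t where "t = P2 / (1 + P2 * energy2)"
  define zz where "zz = (cmod cross_energy)\<^sup>2"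
  have lincomb: "precoder1 = (\<lambda>r. of_real \<kappa> * cnj (u1 r) + (- of_real (\<kappa> * t) * cross_energy) * cnj (u2 r))"
    unfolding precoder1_lincomb \<kappa>_def t_def ..
  have cross: "integral\<^sup>L M (\<lambda>x. cnj (u1 x) * cnj (cnj (u2 x))) = cross_energy"
    unfolding cross_energy_def by simp
  have "cnj cross_energy * cross_energy = of_real zz"
    unfolding zz_def complex_norm_square by (simp add: mult.commute)
  then have "of_real \<kappa> * cnj (- of_real (\<kappa> * t) * cross_energy) * cross_energy = of_real (- (\<kappa>\<^sup>2 * t * zz))"
    by (simp add: power2_eq_square algebra_simps)
  then have re: "Re (of_real \<kappa> * cnj (- of_real (\<kappa> * t) * cross_energy) * cross_energy) = - (\<kappa>\<^sup>2 * t * zz)"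
    by (simp only: Re_complex_of_real)
  have norm_b: "(cmod (- of_real (\<kappa> * t) * cross_energy))\<^sup>2 = \<kappa>\<^sup>2 * t\<^sup>2 * zz"
    unfolding zz_def norm_mult norm_minus_cancel norm_of_real power_mult_distrib power2_abs ..
  have energies: "integral\<^sup>L M (\<lambda>x. (cmod (cnj (u1 x)))\<^sup>2) = energy1"
    "integral\<^sup>L M (\<lambda>x. (cmod (cnj (u2 x)))\<^sup>2) = energy2"
    unfolding energy1_def energy2_def by simp_all
  have "integral\<^sup>L M (\<lambda>x. (cmod (precoder1 x))\<^sup>2) = \<kappa>\<^sup>2 * (energy1 + t\<^sup>2 * zz * energy2 - 2 * t * zz)"
    unfolding lincomb integral_norm_square_lincomb[OF
      square_integrable_cnj[OF square_integrable_u1] square_integrable_cnj[OF square_integrable_u2]]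
      cross re norm_b energies
    by (simp add: algebra_simps)
  then show ?thesis
    unfolding \<kappa>_def t_def zz_def sqrt_P1_mmse_gain1_square .
qed

lemma power_precoder1:
  "integral\<^sup>L M (\<lambda>x. (cmod (precoder1 x))\<^sup>2) = P1 - P2 * interference2"
proof -
  define e where "e = 1 + P2 * energy2"
  define zz where "zz = (cmod cross_energy)\<^sup>2"
  have "(P2 / e)\<^sup>2 * zz * energy2 = P2 * zz * (P2 * energy2) / e\<^sup>2"
    by (simp add: power2_eq_square)
  also have "\<dots> = P2 * zz * (e - 1) / e\<^sup>2"
    unfolding e_def by simp
  finally have cross_term: "(P2 / e)\<^sup>2 * zz * energy2 = P2 * zz * (e - 1) / e\<^sup>2" .
  have "0 < e"
    unfolding e_def by (rule one_plus_P2_energy2_pos)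
  then show ?thesis
    using mmse_gain1_pos
    unfolding integral_norm_square_precoder1 interference2_eq mmse_gain1_def
      e_def[symmetric] zz_def[symmetric] cross_term
    by (simp add: field_simps power2_eq_square)
qed

lemma precoder2_eq:
  "precoder2 = (\<lambda>r. of_real (sqrt (P2 * (1 + interference2) / energy2)) * cnj (u2 r))"
  by (auto simp: precoder2_def real_sqrt_mult real_sqrt_divide)

lemma sqrt_precoder2_gain_square:
  "(sqrt (P2 * (1 + interference2) / energy2))\<^sup>2 = P2 * (1 + interference2) / energy2"
  using P2_nonneg energy2_pos by (simp add: interference2_def)

lemma norm_integral_u2_precoder2_square:
  "(cmod (integral\<^sup>L M (\<lambda>x. u2 x * precoder2 x)))\<^sup>2 = P2 * energy2 * (1 + interference2)"
proof -
  define \<mu> where "\<mu> = sqrt (P2 * (1 + interference2) / energy2)"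
  have "(\<lambda>x. u2 x * precoder2 x) = (\<lambda>x. of_real \<mu> * (u2 x * cnj (u2 x)))"
    unfolding precoder2_eq \<mu>_def by (simp add: mult.left_commute)
  then have signal: "integral\<^sup>L M (\<lambda>x. u2 x * precoder2 x) = of_real (\<mu> * energy2)"
    by (simp add: integral_mult_cnj_self energy2_def)
  show ?thesis
    unfolding signal norm_of_real power2_abs power_mult_distrib \<mu>_def sqrt_precoder2_gain_square
    using energy2_pos by (simp add: power2_eq_square)
qed

lemma power_precoder2:
  "integral\<^sup>L M (\<lambda>x. (cmod (precoder2 x))\<^sup>2) = P2 * (1 + interference2)"
  unfolding precoder2_eq integral_norm_square_cmult norm_of_real power2_abs sqrt_precoder2_gain_square
  using energy2_pos by (simp add: energy2_def)

lemma sinr2_eq: "(cmod (integral\<^sup>L M (\<lambda>x. u2 x * precoder2 x)))\<^sup>2 / (1 + interference2) = P2 * energy2"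
proof -
  have "0 < 1 + interference2"
    unfolding interference2_def by (simp add: add_pos_nonneg)
  then show ?thesis
    unfolding norm_integral_u2_precoder2_square by simp
qed

lemma total_power: "integral\<^sup>L M (\<lambda>x. (cmod (precoder1 x))\<^sup>2) +
    integral\<^sup>L M (\<lambda>x. (cmod (precoder2 x))\<^sup>2) = P1 + P2"
  unfolding power_precoder1 power_precoder2 by (simp add: algebra_simps)

lemma sum_rate:
  "log b (1 + P1 * mmse_gain1) + log b (1 + P2 * energy2) =
    log b (1 + P1 * energy1 + P2 * energy2 + P1 * energy1 * (P2 * energy2) * (1 - (cmod (correlation M u1 u2))\<^sup>2))"
proof -
  have product: "(1 + P1 * mmse_gain1) * (1 + P2 * energy2) =
      1 + P1 * energy1 + P2 * energy2 + P1 * energy1 * (P2 * energy2) * (1 - (cmod (correlation M u1 u2))\<^sup>2)"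
    unfolding mmse_gain1_eq using one_plus_P2_energy2_pos by (simp add: field_simps)
  moreover have "0 < 1 + P1 * mmse_gain1"
    using P1_nonneg mmse_gain1_pos by (simp add: add_pos_nonneg)
  then show ?thesis
    unfolding product[symmetric] log_mult using one_plus_P2_energy2_pos by simp
qed

end

lemma dirty_paper_two_users_cmult:
  assumes "square_integrable M v1" "square_integrable M v2"
    and "0 < integral\<^sup>L M (\<lambda>x. (cmod (v1 x))\<^sup>2)" "0 < integral\<^sup>L M (\<lambda>x. (cmod (v2 x))\<^sup>2)"
    and "c1 \<noteq> 0" "c2 \<noteq> 0" "0 \<le> P1" "0 \<le> P2"
  shows "dirty_paper_two_users M (\<lambda>x. c1 * v1 x) (\<lambda>x. c2 * v2 x) P1 P2"
  using assms by unfold_locales (simp_all add: square_integrable_cmult integral_norm_square_cmult)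

lemma norm_square_channel_scale:
  assumes "0 \<le> Au"
  shows "(cmod (of_real (sqrt Au / s) * (\<i> * of_real (k0 * eta / sqrt (4 * pi)))))\<^sup>2 =
    Au * k0\<^sup>2 * eta\<^sup>2 / (4 * pi * s\<^sup>2)"
  using assms unfolding norm_mult norm_of_real norm_ii
  by (simp add: power_mult_distrib power_divide mult_ac)

theorem theorem3:
  fixes A :: "(real^3) set"
    and k0 eta Au1 Au2 sigma1 sigma2 P P1 P2 :: real
    and G1 G2 H1 H2 Hh1 Hh2 J1 J2 :: "real^3 \<Rightarrow> complex"
    and g1 g2 \<gamma>1 \<gamma>2 R1 R2 :: real and \<rho> :: complex
  assumes A_meas: "A \<in> sets lebesgue"
    and A_pos: "0 < emeasure lebesgue A" and A_fin: "emeasure lebesgue A < \<infinity>"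
    and k0_pos: "k0 > 0" and eta_pos: "eta > 0"
    and G1_L2: "L2_on A G1" and G2_L2: "L2_on A G2"
    and g1_pos: "g1 > 0"
    and g2_pos: "g2 > 0"
    and Au1_pos: "Au1 > 0" and Au2_pos: "Au2 > 0"
    and sigma1_pos: "sigma1 > 0" and sigma2_pos: "sigma2 > 0"
    and P_pos: "P > 0" and P1_nn: "P1 \<ge> 0" and P2_nn: "P2 \<ge> 0" and P_sum: "P1 + P2 = P"
    and g1_def: "g1 = rint A (\<lambda>r. (cmod (G1 r))\<^sup>2)"
    and g2_def: "g2 = rint A (\<lambda>r. (cmod (G2 r))\<^sup>2)"
    and H1_def: "H1 = (\<lambda>r. \<i> * complex_of_real (k0 * eta / sqrt (4 * pi)) * G1 r)"
    and H2_def: "H2 = (\<lambda>r. \<i> * complex_of_real (k0 * eta / sqrt (4 * pi)) * G2 r)"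
    and Hh1_def: "Hh1 = (\<lambda>r. complex_of_real (sqrt Au1 / sigma1) * H1 r)"
    and Hh2_def: "Hh2 = (\<lambda>r. complex_of_real (sqrt Au2 / sigma2) * H2 r)"
    and rho_def: "\<rho> = cint A (\<lambda>r. cnj (G1 r) * G2 r) / complex_of_real (sqrt (g1 * g2))"
    and gamma1_def: "\<gamma>1 = Au1 * k0\<^sup>2 * eta\<^sup>2 / (4 * pi * sigma1\<^sup>2) * P1"
    and gamma2_def: "\<gamma>2 = Au2 * k0\<^sup>2 * eta\<^sup>2 / (4 * pi * sigma2\<^sup>2) * P2"
    and J1_def: "J1 = (\<lambda>r. complex_of_real (sqrt P1) *
          (cnj (Hh1 r) - (complex_of_real P2 * cint A (\<lambda>s. cnj (Hh1 s) * Hh2 s)) /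
              complex_of_real (1 + P2 * rint A (\<lambda>s. (cmod (Hh2 s))\<^sup>2)) * cnj (Hh2 r)) /
          complex_of_real (sqrt (rint A (\<lambda>s. (cmod (Hh1 s))\<^sup>2)
              - P2 * (cmod (cint A (\<lambda>s. cnj (Hh1 s) * Hh2 s)))\<^sup>2
                / (1 + P2 * rint A (\<lambda>s. (cmod (Hh2 s))\<^sup>2)))))"
    and J2_def: "J2 = (\<lambda>r. complex_of_real (sqrt P2) *
          (cnj (Hh2 r) * complex_of_real (sqrt (1 + (cmod (cint A (\<lambda>s. Hh2 s * J1 s)))\<^sup>2))) /
          complex_of_real (sqrt (rint A (\<lambda>s. (cmod (Hh2 s))\<^sup>2))))"
    and R1_def: "R1 = log 2 (1 + (cmod (cint A (\<lambda>s. Hh1 s * J1 s)))\<^sup>2)"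
    and R2_def: "R2 = log 2 (1 + (cmod (cint A (\<lambda>s. Hh2 s * J2 s)))\<^sup>2
                     / (1 + (cmod (cint A (\<lambda>s. Hh2 s * J1 s)))\<^sup>2))"
  shows "R1 = log 2 (1 + \<gamma>1 * g1 * (1 - \<gamma>2 * g2 * (cmod \<rho>)\<^sup>2 / (1 + \<gamma>2 * g2))) \<and>
         R2 = log 2 (1 + \<gamma>2 * g2) \<and>
         R1 + R2 = log 2 (1 + \<gamma>1 * g1 + \<gamma>2 * g2 + \<gamma>1 * \<gamma>2 * g1 * g2 * (1 - (cmod \<rho>)\<^sup>2)) \<and>
         rint A (\<lambda>r. (cmod (J1 r))\<^sup>2) + rint A (\<lambda>r. (cmod (J2 r))\<^sup>2) = P1 + P2 \<and>
         P1 + P2 = P"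
proof -
  let ?M = "lebesgue_on A"
  define c where "c = \<i> * complex_of_real (k0 * eta / sqrt (4 * pi))"
  define c1 where "c1 = complex_of_real (sqrt Au1 / sigma1) * c"
  define c2 where "c2 = complex_of_real (sqrt Au2 / sigma2) * c"
  have Hh: "Hh1 = (\<lambda>r. c1 * G1 r)" "Hh2 = (\<lambda>r. c2 * G2 r)"
    unfolding Hh1_def Hh2_def H1_def H2_def c1_def c2_def c_def by (simp_all add: mult.assoc)
  have c_nonzero: "c1 \<noteq> 0" "c2 \<noteq> 0"
    unfolding c1_def c2_def c_def using k0_pos eta_pos Au1_pos Au2_pos sigma1_pos sigma2_pos by simp_all
  interpret dpc: dirty_paper_two_users ?M Hh1 Hh2 P1 P2
    unfolding Hh using G1_L2 G2_L2 g1_pos g2_pos c_nonzero P1_nn P2_nn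
    by (intro dirty_paper_two_users_cmult) (simp_all add: L2_on_def square_integrable_def g1_def g2_def rint_def)
  have gains: "\<gamma>1 * g1 = P1 * dpc.energy1" "\<gamma>2 * g2 = P2 * dpc.energy2"
    unfolding dpc.energy1_def dpc.energy2_def unfolding Hh integral_norm_square_cmult c1_def c2_def c_def
      norm_square_channel_scale[OF less_imp_le[OF Au1_pos]]
      norm_square_channel_scale[OF less_imp_le[OF Au2_pos]]
      gamma1_def gamma2_def g1_def g2_def rint_def
    by simp_all
  have correlation: "(cmod (correlation ?M Hh1 Hh2))\<^sup>2 = (cmod \<rho>)\<^sup>2"
    unfolding Hh norm_correlation_cmult[OF c_nonzero]
    by (simp add: correlation_def rho_def cint_def g1_def g2_def rint_def)
  have J1: "J1 = dpc.precoder1"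
    unfolding J1_def dpc.precoder1_def dpc.mmse_gain1_def dpc.energy1_def dpc.energy2_def
      dpc.cross_energy_def cint_def rint_def ..
  have J2: "J2 = dpc.precoder2"
    unfolding J2_def dpc.precoder2_def dpc.interference2_def dpc.energy2_def J1 cint_def rint_def ..
  have R1: "R1 = log 2 (1 + P1 * dpc.mmse_gain1)"
    unfolding R1_def J1 cint_def dpc.norm_integral_u1_precoder1_square ..
  have R2: "R2 = log 2 (1 + \<gamma>2 * g2)"
    using dpc.sinr2_eq unfolding R2_def J1 J2 cint_def dpc.interference2_def gains by simp
  have rate1: "P1 * dpc.mmse_gain1 = \<gamma>1 * g1 * (1 - \<gamma>2 * g2 * (cmod \<rho>)\<^sup>2 / (1 + \<gamma>2 * g2))"
    unfolding dpc.mmse_gain1_eq gains correlation by (simp only: mult.assoc)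
  have sum_rate: "R1 + R2 = log 2 (1 + \<gamma>1 * g1 + \<gamma>2 * g2 + \<gamma>1 * \<gamma>2 * g1 * g2 * (1 - (cmod \<rho>)\<^sup>2))"
    using dpc.sum_rate[of 2, unfolded gains[symmetric] correlation] unfolding R1 R2 by (simp add: mult_ac)
  have power: "rint A (\<lambda>r. (cmod (J1 r))\<^sup>2) + rint A (\<lambda>r. (cmod (J2 r))\<^sup>2) = P1 + P2"
    unfolding J1 J2 rint_def by (rule dpc.total_power)
  show ?thesis
    using R1 R2 rate1 sum_rate power P_sum by simp
qed

end
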